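(* Let $p\geq 3$ be a prime and let $G$ be a group of order $p^5$ generated by elements $f_1,\dots,f_5$ which (possibly among other relations) satisfy: (i) $f_4^p=f_5^p=1$ and $f_5\in Z(G)$; (ii) $[f_2,f_1]=f_3$, $[f_3,f_1]=f_4$, $[f_4,f_1]=[f_3,f_2]=f_5$, $[f_4,f_2]=[f_4,f_3]=1$; (iii) $\langle f_4,f_5\rangle\cong C_p\times C_p$, and $G/\langle f_4,f_5\rangle$ is a non-abelian group of order $p^3$ and exponent $p$. Then $B_0(G)\neq 0$.
   Context: $[g,h]=g^{-1}h^{-1}gh$; $Z(G)$ is the center of $G$; $C_p$ is the cyclic group of order $p$. $B_0(G)=\bigcap_A \ker\{\mathrm{res}^G_A : H^2(G,\mathbb{Q}/\mathbb{Z})\to H^2(A,\mathbb{Q}/\mathbb{Z})\}$, where $A$ runs over all bicyclic subgroups of $G$ (cyclic groups or direct products of two cyclic groups), with trivial action on $\mathbb{Q}/\mathbb{Z}$. *)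

theory Defs
  imports "HOL-Algebra.Algebra"
begin

definition commutator :: "('a, 'b) monoid_scheme \<Rightarrow> 'a \<Rightarrow> 'a \<Rightarrow> 'a" where
  "commutator G g h = inv\<^bsub>G\<^esub> g \<otimes>\<^bsub>G\<^esub> inv\<^bsub>G\<^esub> h \<otimes>\<^bsub>G\<^esub> g \<otimes>\<^bsub>G\<^esub> h"

definition has_exponent :: "('a, 'b) monoid_scheme \<Rightarrow> nat \<Rightarrow> bool" where
  "has_exponent G n \<longleftrightarrow> n > 0 \<and> (\<forall>x\<in>carrier G. x [^]\<^bsub>G\<^esub> n = \<one>\<^bsub>G\<^esub>) \<and>
     (\<forall>m>0. (\<forall>x\<in>carrier G. x [^]\<^bsub>G\<^esub> m = \<one>\<^bsub>G\<^esub>) \<longrightarrow> n dvd m)"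

(* Q/Z is represented by rat modulo the integers *)
definition qz_eq :: "rat \<Rightarrow> rat \<Rightarrow> bool" where
  "qz_eq x y \<longleftrightarrow> x - y \<in> \<int>"

(* inhomogeneous 2-cochains G x G -> Q/Z with trivial action *)
definition cocycle2 :: "('a, 'b) monoid_scheme \<Rightarrow> ('a \<Rightarrow> 'a \<Rightarrow> rat) \<Rightarrow> bool" where
  "cocycle2 G c \<longleftrightarrow> (\<forall>g\<in>carrier G. \<forall>h\<in>carrier G. \<forall>k\<in>carrier G.
      qz_eq (c h k - c (g \<otimes>\<^bsub>G\<^esub> h) k + c g (h \<otimes>\<^bsub>G\<^esub> k) - c g h) 0)"

definition coboundary2 :: "('a, 'b) monoid_scheme \<Rightarrow> ('a \<Rightarrow> 'a \<Rightarrow> rat) \<Rightarrow> bool" where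
  "coboundary2 G c \<longleftrightarrow> (\<exists>f :: 'a \<Rightarrow> rat. \<forall>g\<in>carrier G. \<forall>h\<in>carrier G.
      qz_eq (c g h) (f h - f (g \<otimes>\<^bsub>G\<^esub> h) + f g))"

definition bicyclic_subgroup :: "('a, 'b) monoid_scheme \<Rightarrow> 'a set \<Rightarrow> bool" where
  "bicyclic_subgroup G A \<longleftrightarrow> subgroup A G \<and>
     (\<exists>a\<in>carrier G. \<exists>b\<in>carrier G. A = generate G {a, b}) \<and>
     (\<forall>x\<in>A. \<forall>y\<in>A. x \<otimes>\<^bsub>G\<^esub> y = y \<otimes>\<^bsub>G\<^esub> x)"

(* B_0(G) \<noteq> 0: some class in H^2(G,Q/Z) is nonzero but restricts to zero
   in H^2(A,Q/Z) for every bicyclic subgroup A *)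
definition bogomolov_nontrivial :: "('a, 'b) monoid_scheme \<Rightarrow> bool" where
  "bogomolov_nontrivial G \<longleftrightarrow> (\<exists>c. cocycle2 G c \<and> \<not> coboundary2 G c \<and>
     (\<forall>A. bicyclic_subgroup G A \<longrightarrow> coboundary2 (G\<lparr>carrier := A\<rparr>) c))"

end

theory Submission
  imports Defs
begin

(* Let N = <f4, f5> and Q = G/N.  By the hypotheses Q is the Heisenberg group of order p^3 and
   exponent p, with generators x, y, z the images of f1, f2, f3; every element of Q is uniquely
   x^a y^b z^c with a, b, c < p.  On Q we use the explicit 2-cocycle
       beta(x^a y^b z^c, x^a' y^b' z^c') = (c b' - b c' + b a' b') / p     (mod Z),
   whose antisymmetrisation at (y, z) is -2/p.  Its inflation c = beta o pi to G is the class
   exhibiting B_0(G) <> 0: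
   (1) c is not a coboundary: for a coboundary df and h g = g h k one has
       c(g,h) - c(h,g) + c(gh,k) = f(k) mod Z.  Applying this to f3 f2 = f2 f3 f5 and to
       f4 f1 = f1 f4 f5 (where c vanishes) yields -2/p in Z, impossible for p >= 3.
   (2) c restricts to a coboundary on every bicyclic subgroup A = <a, b>: a commutation
       computation in G shows that the images of commuting elements a, b lie in one cyclic
       subgroup of Q, and every 2-cocycle restricted to a cyclic group is a coboundary. *)

lemma (in group) commutator_relation:
  assumes a: "a \<in> carrier G" and b: "b \<in> carrier G" and k: "commutator G a b = k"
  shows "a \<otimes> b = b \<otimes> a \<otimes> k"
proof -
  have "b \<otimes> a \<otimes> k = b \<otimes> (a \<otimes> (inv a \<otimes> (inv b \<otimes> (a \<otimes> b))))"
    unfolding k[symmetric] commutator_def using a b by (simp add: m_assoc)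
  also have "\<dots> = b \<otimes> (inv b \<otimes> (a \<otimes> b))" using a b by (simp add: m_assoc[symmetric])
  also have "\<dots> = a \<otimes> b" using a b by (simp add: m_assoc[symmetric])
  finally show ?thesis by simp
qed

lemma (in monoid) pow_pow_commute:
  assumes "x \<otimes> y = y \<otimes> x" "x \<in> carrier G" "y \<in> carrier G"
  shows "x [^] (m::nat) \<otimes> y [^] (n::nat) = y [^] n \<otimes> x [^] m"
proof -
  have "y [^] n \<otimes> x = x \<otimes> y [^] n" using group_commutes_pow[of y x n] assms by simp
  then show ?thesis using group_commutes_pow[of x "y [^] n" m] assms by simp
qed

lemma (in group) commute_mult:
  assumes "a \<otimes> b = b \<otimes> a" "a \<otimes> c = c \<otimes> a" "a \<in> carrier G" "b \<in> carrier G" "c \<in> carrier G"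
  shows "a \<otimes> (b \<otimes> c) = (b \<otimes> c) \<otimes> a"
  using assms by (metis m_assoc)

lemma (in monoid) pow_mod_exponent:
  assumes "x \<in> carrier G" "x [^] (p::nat) = \<one>"
  shows "x [^] (n::nat) = x [^] (n mod p)"
proof -
  have "x [^] n = x [^] (p * (n div p) + n mod p)" by simp
  also have "\<dots> = (x [^] p) [^] (n div p) \<otimes> x [^] (n mod p)"
    by (simp only: nat_pow_pow[OF assms(1)] nat_pow_mult[OF assms(1)])
  also have "\<dots> = x [^] (n mod p)" using assms by (simp add: nat_pow_one)
  finally show ?thesis .
qed

lemma (in group) inv_eq_pow_pred:
  assumes "w \<in> carrier G" "w [^] (n::nat) = \<one>" "n \<ge> 1"
  shows "inv w = w [^] (n - 1)"
proof -
  have "w [^] (n - 1) \<otimes> w = w [^] n"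
    using assms(1,3) nat_pow_Suc[of w "n - 1"] by simp
  then show ?thesis using assms by (metis inv_equality nat_pow_closed)
qed

lemma (in group) pow_eq_imp_mod_ord:
  assumes u: "u \<in> carrier G" and e: "u [^] (i::nat) = u [^] (k::nat)"
  shows "i mod ord u = k mod ord u"
proof -
  have "int (ord u) dvd (int k - int i)"
    using int_pow_eq[OF u, of "int i" "int k"] e by (simp add: int_pow_int)
  then have "int i mod int (ord u) = int k mod int (ord u)"
    by (simp add: mod_eq_dvd_iff dvd_diff_commute)
  then show ?thesis by (simp flip: zmod_int)
qed

section \<open>2-cocycles with values in Q/Z\<close>

lemma (in group) cocycle_on_powers:
  assumes u: "u \<in> carrier G" and coc: "cocycle2 G c"
    and F0: "F 0 = c \<one> \<one>" and step: "\<And>k. F (Suc k) = F k + s - c u (u [^] k)"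
  shows "c (u [^] i) (u [^] j) - (F j - F (i + j) + F i) \<in> \<int>"
proof -
  have cc: "c h k - c (g \<otimes> h) k + c g (h \<otimes> k) - c g h \<in> \<int>"
    if "g \<in> carrier G" "h \<in> carrier G" "k \<in> carrier G" for g h k
    using coc that unfolding cocycle2_def qz_eq_def by simp
  show ?thesis
  proof (induction i)
    case 0
    have "c \<one> (u [^] j) - c (\<one> \<otimes> \<one>) (u [^] j) + c \<one> (\<one> \<otimes> u [^] j) - c \<one> \<one> \<in> \<int>"
      by (rule cc) (use u in auto)
    then show ?case using F0 u by simp
  next
    case (Suc i)
    have "c (u [^] i) (u [^] j) - c (u \<otimes> u [^] i) (u [^] j) + c u (u [^] i \<otimes> u [^] j)
        - c u (u [^] i) \<in> \<int>"
      by (rule cc) (use u in auto)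
    then have coc_u: "c (u [^] i) (u [^] j) - c (u [^] Suc i) (u [^] j) + c u (u [^] (i + j))
        - c u (u [^] i) \<in> \<int>"
      using u by (simp only: nat_pow_Suc2[OF u] nat_pow_mult[OF u])
    have eq: "c (u [^] Suc i) (u [^] j) - (F j - F (Suc i + j) + F (Suc i))
      = (c (u [^] i) (u [^] j) - (F j - F (i + j) + F i))
        - (c (u [^] i) (u [^] j) - c (u [^] Suc i) (u [^] j) + c u (u [^] (i + j)) - c u (u [^] i))"
      using step[of "i + j"] step[of i] by (simp add: algebra_simps del: nat_pow_Suc)
    show ?case unfolding eq by (rule Ints_diff[OF Suc.IH coc_u])
  qed
qed

(* Every 2-cocycle restricted to a cyclic subgroup <u> of a finite group is a coboundary.
   The averaged increment s makes F periodic modulo ord u, so F descends to <u>. *)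
lemma (in group) cocycle_on_cyclic_is_coboundary:
  assumes fin: "finite (carrier G)" and u: "u \<in> carrier G" and coc: "cocycle2 G c"
  shows "\<exists>f. \<forall>(i::nat) (j::nat). qz_eq (c (u [^] i) (u [^] j))
                                         (f (u [^] j) - f (u [^] i \<otimes> u [^] j) + f (u [^] i))"
proof -
  define n where "n = ord u"
  have n1: "n \<ge> 1" using ord_ge_1[OF fin u] n_def by simp
  have umod: "u [^] k = u [^] (k mod n)" for k :: nat
    using pow_mod_exponent[OF u] u n_def by simp
  define s where "s = (\<Sum>i<n. c u (u [^] i)) / of_nat n"
  have ns: "of_nat n * s = (\<Sum>i<n. c u (u [^] i))" using n1 by (simp add: s_def)
  define F where "F k = c \<one> \<one> + of_nat (k mod n) * s - (\<Sum>i<k mod n. c u (u [^] i))" for k :: nat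
  have step: "F (Suc k) = F k + s - c u (u [^] k)" for k
  proof (cases "Suc (k mod n) < n")
    case True
    then have "Suc k mod n = Suc (k mod n)" by (simp add: mod_Suc)
    then show ?thesis using umod[of k] unfolding F_def by (simp add: algebra_simps)
  next
    case False
    have "k mod n < n" using n1 by simp
    then have km: "k mod n = n - 1" using False by linarith
    then have "Suc k mod n = 0" using n1 by (simp add: mod_Suc)
    moreover have "(\<Sum>i<n. c u (u [^] i)) = (\<Sum>i<n - 1. c u (u [^] i)) + c u (u [^] (n - 1))"
      using n1 sum.lessThan_Suc[of "\<lambda>i. c u (u [^] i)" "n - 1"] by simp
    moreover have "u [^] k = u [^] (n - 1)" using umod[of k] km by simp
    ultimately show ?thesis unfolding F_def using km n1 ns by (simp add: algebra_simps of_nat_diff)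
  qed
  have F_powers: "F i = F k" if "u [^] i = u [^] k" for i k
    using pow_eq_imp_mod_ord[OF u that] unfolding F_def n_def by simp
  define f where "f v = F (SOME k. v = u [^] k)" for v
  have f_pow: "f (u [^] i) = F i" for i
    unfolding f_def by (rule F_powers[symmetric], rule someI_ex) blast
  show ?thesis
  proof (intro exI[of _ f] allI)
    fix i j :: nat
    show "qz_eq (c (u [^] i) (u [^] j)) (f (u [^] j) - f (u [^] i \<otimes> u [^] j) + f (u [^] i))"
      using cocycle_on_powers[OF u coc _ step, of i j] u
      unfolding qz_eq_def f_pow nat_pow_mult[OF u] by (simp add: F_def)
  qed
qed

lemma (in group) coboundary_commutator:
  assumes cob: "\<And>g h. g \<in> carrier G \<Longrightarrow> h \<in> carrier G \<Longrightarrow> qz_eq (c g h) (f h - f (g \<otimes> h) + f g)"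
    and g: "g \<in> carrier G" and h: "h \<in> carrier G" and k: "k \<in> carrier G"
    and hg: "h \<otimes> g = g \<otimes> h \<otimes> k"
  shows "c g h - c h g + c (g \<otimes> h) k - f k \<in> \<int>"
proof -
  have cob': "c a b - (f b - f (a \<otimes> b) + f a) \<in> \<int>" if "a \<in> carrier G" "b \<in> carrier G" for a b
    using cob[OF that] unfolding qz_eq_def .
  have "(c g h - (f h - f (g \<otimes> h) + f g)) - (c h g - (f g - f (h \<otimes> g) + f h))
        + (c (g \<otimes> h) k - (f k - f (g \<otimes> h \<otimes> k) + f (g \<otimes> h))) \<in> \<int>"
    using g h k by (intro Ints_add[OF Ints_diff[OF cob' cob']] cob') auto
  then show ?thesis using hg by (simp add: algebra_simps)
qed

section \<open>The Heisenberg cocycle on integer coordinates\<close>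

(* Multiplication of coordinates: x^a y^b z^c * x^a' y^b' z^c' = x^(a+a') y^(b+b') z^(c+c'+a'b). *)
fun heis_mult :: "nat \<times> nat \<times> nat \<Rightarrow> nat \<times> nat \<times> nat \<Rightarrow> nat \<times> nat \<times> nat" where
  "heis_mult (a, b, c) (a', b', c') = (a + a', b + b', c + c' + a' * b)"

fun reduce_mod :: "nat \<Rightarrow> nat \<times> nat \<times> nat \<Rightarrow> nat \<times> nat \<times> nat" where
  "reduce_mod p (a, b, c) = (a mod p, b mod p, c mod p)"

fun heis_form :: "nat \<times> nat \<times> nat \<Rightarrow> nat \<times> nat \<times> nat \<Rightarrow> int" where
  "heis_form (a, b, c) (a', b', c') = int c * int b' - int b * int c' + int b * int a' * int b'"

lemma heis_form_cocycle:
  "heis_form v w - heis_form (heis_mult u v) w + heis_form u (heis_mult v w) - heis_form u v = 0"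
  by (cases u; cases v; cases w) (simp add: algebra_simps)

lemma heis_form_reduce_left: "heis_form (reduce_mod p u) v mod int p = heis_form u v mod int p"
  by (cases u; cases v) (auto simp: zmod_int intro!: mod_add_cong mod_diff_cong mod_mult_cong)

lemma heis_form_reduce_right: "heis_form u (reduce_mod p v) mod int p = heis_form u v mod int p"
  by (cases u; cases v) (auto simp: zmod_int intro!: mod_add_cong mod_diff_cong mod_mult_cong)

lemma divisible_int_quotient_in_Ints:
  assumes "D mod int p = 0" "p > 0"
  shows "(of_int D / of_nat p :: rat) \<in> \<int>"
proof -
  obtain k where "D = int p * k" using assms(1) by (metis dvd_def mod_0_imp_dvd)
  then show ?thesis using assms(2) by simp
qed

section \<open>The Heisenberg group of order p^3 and exponent p\<close>

locale heisenberg = group Q for Q (structure) +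
  fixes p :: nat and x y z
  assumes p_prime: "Factorial_Ring.prime p"
    and xyz: "x \<in> carrier Q" "y \<in> carrier Q" "z \<in> carrier Q"
    and yx: "y \<otimes> x = x \<otimes> y \<otimes> z"
    and zx: "z \<otimes> x = x \<otimes> z" and zy: "z \<otimes> y = y \<otimes> z"
    and xp: "x [^] p = \<one>" and yp: "y [^] p = \<one>" and zp: "z [^] p = \<one>"
    and finQ: "finite (carrier Q)" and cardQ: "card (carrier Q) = p ^ 3"
    and genQ: "carrier Q \<subseteq> generate Q {x, y, z}"
begin

lemma p_gt1: "p > 1" using p_prime prime_gt_1_nat by blast

definition word :: "nat \<times> nat \<times> nat \<Rightarrow> 'a" where
  "word t = (case t of (a, b, c) \<Rightarrow> x [^] a \<otimes> y [^] b \<otimes> z [^] c)"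

definition box :: "(nat \<times> nat \<times> nat) set" where
  "box = {0..<p} \<times> {0..<p} \<times> {0..<p}"

lemma word_closed [simp]: "word t \<in> carrier Q"
  using xyz by (auto simp: word_def split: prod.splits)

lemma box_mem [simp]: "(a, b, c) \<in> box \<longleftrightarrow> a < p \<and> b < p \<and> c < p"
  by (auto simp: box_def)

lemma reduce_mod_in_box: "reduce_mod p t \<in> box"
  using p_gt1 by (cases t) simp

lemma y_x_pow: "y \<otimes> x [^] (a::nat) = x [^] a \<otimes> y \<otimes> z [^] a"
proof (induction a)
  case 0 then show ?case using xyz by simp
next
  case (Suc a)
  have zax: "z [^] a \<otimes> x = x \<otimes> z [^] a" using group_commutes_pow[of z x a] zx xyz by simp
  have zz: "z \<otimes> z [^] a = z [^] a \<otimes> z" by (metis nat_pow_Suc nat_pow_Suc2 xyz(3))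
  have "y \<otimes> x [^] Suc a = (y \<otimes> x [^] a) \<otimes> x" using xyz by (simp add: m_assoc)
  also have "\<dots> = x [^] a \<otimes> y \<otimes> (z [^] a \<otimes> x)" using Suc xyz by (simp add: m_assoc)
  also have "\<dots> = x [^] a \<otimes> (y \<otimes> x) \<otimes> z [^] a" using zax xyz by (simp add: m_assoc)
  also have "\<dots> = x [^] a \<otimes> x \<otimes> y \<otimes> (z \<otimes> z [^] a)" using yx xyz by (simp add: m_assoc)
  also have "\<dots> = x [^] Suc a \<otimes> y \<otimes> z [^] Suc a" using xyz zz by (simp add: m_assoc)
  finally show ?case .
qed

lemma y_pow_x_pow: "y [^] (b::nat) \<otimes> x [^] (a::nat) = x [^] a \<otimes> y [^] b \<otimes> z [^] (a * b)"
proof (induction b)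
  case 0 then show ?case using xyz by simp
next
  case (Suc b)
  have zy': "z [^] (a * b) \<otimes> y = y \<otimes> z [^] (a * b)"
    using group_commutes_pow[of z y "a * b"] zy xyz by simp
  have "y [^] Suc b \<otimes> x [^] a = y [^] b \<otimes> (y \<otimes> x [^] a)" using xyz by (simp add: nat_pow_Suc2 m_assoc)
  also have "\<dots> = (y [^] b \<otimes> x [^] a) \<otimes> y \<otimes> z [^] a" using y_x_pow xyz by (simp add: m_assoc)
  also have "\<dots> = x [^] a \<otimes> y [^] b \<otimes> (z [^] (a * b) \<otimes> y) \<otimes> z [^] a" using Suc xyz by (simp add: m_assoc)
  also have "\<dots> = x [^] a \<otimes> (y [^] b \<otimes> y) \<otimes> (z [^] (a * b) \<otimes> z [^] a)" using zy' xyz by (simp add: m_assoc)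
  also have "\<dots> = x [^] a \<otimes> y [^] Suc b \<otimes> z [^] (a * Suc b)" using xyz by (simp add: nat_pow_mult add.commute)
  finally show ?case .
qed

lemma word_mult: "word u \<otimes> word v = word (heis_mult u v)"
proof -
  obtain a b c a' b' c' where uv: "u = (a, b, c)" "v = (a', b', c')" by (cases u; cases v) auto
  have "z \<otimes> (x [^] a' \<otimes> y [^] b') = (x [^] a' \<otimes> y [^] b') \<otimes> z"
    using commute_mult pow_pow_commute[of x z a' 1] pow_pow_commute[of y z b' 1] zx zy xyz
    by simp
  then have zc: "z [^] c \<otimes> (x [^] a' \<otimes> y [^] b') = (x [^] a' \<otimes> y [^] b') \<otimes> z [^] c"
    using group_commutes_pow[of z _ c] xyz by simp
  have "word u \<otimes> word v = x [^] a \<otimes> y [^] b \<otimes> (z [^] c \<otimes> (x [^] a' \<otimes> y [^] b')) \<otimes> z [^] c'"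
    using xyz by (simp add: uv word_def m_assoc)
  also have "\<dots> = x [^] a \<otimes> (y [^] b \<otimes> x [^] a') \<otimes> y [^] b' \<otimes> (z [^] c \<otimes> z [^] c')"
    using zc xyz by (simp add: m_assoc)
  also have "\<dots> = x [^] a \<otimes> x [^] a' \<otimes> y [^] b \<otimes> (z [^] (a' * b) \<otimes> y [^] b') \<otimes> (z [^] c \<otimes> z [^] c')"
    using y_pow_x_pow xyz by (simp add: m_assoc)
  also have "\<dots> = x [^] a \<otimes> x [^] a' \<otimes> y [^] b \<otimes> y [^] b' \<otimes> (z [^] (a' * b) \<otimes> (z [^] c \<otimes> z [^] c'))"
    using pow_pow_commute[of z y "a' * b" b'] zy xyz by (simp add: m_assoc)
  also have "\<dots> = word (heis_mult u v)"
    using xyz by (simp add: uv word_def m_assoc nat_pow_mult add.commute add.left_commute)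
  finally show ?thesis .
qed

lemma word_reduce: "word (reduce_mod p t) = word t"
  using pow_mod_exponent[OF _ xp] pow_mod_exponent[OF _ yp] pow_mod_exponent[OF _ zp] xyz
  by (cases t) (simp add: word_def)

lemma word_z_pow: "word (0, 0, c) = z [^] c"
  using xyz by (simp add: word_def)

lemma carrier_eq_words: "carrier Q = word ` box"
proof
  show "carrier Q \<subseteq> word ` box"
  proof
    fix q assume "q \<in> carrier Q"
    then have "q \<in> generate Q {x, y, z}" using genQ by auto
    then show "q \<in> word ` box"
    proof (induction rule: generate.induct)
      case one
      have "\<one> = word (0, 0, 0)" by (simp add: word_def)
      then show ?case using p_gt1 by auto
    next
      case (incl h)
      have "x = word (1, 0, 0)" "y = word (0, 1, 0)" "z = word (0, 0, 1)"
        using xyz by (simp_all add: word_def)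
      then show ?case using incl p_gt1 by auto
    next
      case (inv h)
      have "inv x = word (p - 1, 0, 0)" "inv y = word (0, p - 1, 0)" "inv z = word (0, 0, p - 1)"
        using inv_eq_pow_pred[OF xyz(1) xp] inv_eq_pow_pred[OF xyz(2) yp]
          inv_eq_pow_pred[OF xyz(3) zp] xyz p_gt1 by (simp_all add: word_def)
      then show ?case using inv p_gt1 by auto
    next
      case (eng h1 h2)
      then obtain t1 t2 where "h1 = word t1" "h2 = word t2" by blast
      then have "h1 \<otimes> h2 = word (reduce_mod p (heis_mult t1 t2))" by (simp add: word_mult word_reduce)
      then show ?case using reduce_mod_in_box by blast
    qed
  qed
qed auto

lemma word_inj: "inj_on word box"
  using carrier_eq_words cardQ by (intro eq_card_imp_inj_on) (auto simp: box_def card_cartesian_product power3_eq_cube)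

definition coord :: "'a \<Rightarrow> nat \<times> nat \<times> nat" where
  "coord q = the_inv_into box word q"

lemma coord_word: "t \<in> box \<Longrightarrow> coord (word t) = t"
  by (simp add: coord_def word_inj the_inv_into_f_f)

lemma coord_in_box: "q \<in> carrier Q \<Longrightarrow> coord q \<in> box"
  using carrier_eq_words word_inj by (simp add: coord_def the_inv_into_into)

lemma word_coord: "q \<in> carrier Q \<Longrightarrow> word (coord q) = q"
  using carrier_eq_words word_inj by (simp add: coord_def f_the_inv_into_f)

lemma coord_mult:
  "q \<in> carrier Q \<Longrightarrow> r \<in> carrier Q \<Longrightarrow> coord (q \<otimes> r) = reduce_mod p (heis_mult (coord q) (coord r))"
  by (metis word_coord word_mult word_reduce coord_word reduce_mod_in_box)

lemma coord_one: "coord \<one> = (0, 0, 0)"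
  using coord_word[of "(0, 0, 0)"] p_gt1 by (simp add: word_def)

lemma coord_y: "coord y = (0, 1, 0)"
  using coord_word[of "(0, 1, 0)"] p_gt1 xyz by (simp add: word_def)

lemma coord_z: "coord z = (0, 0, 1)"
  using coord_word[of "(0, 0, 1)"] p_gt1 xyz by (simp add: word_def)

lemma coord_pow:
  assumes "q \<in> carrier Q" "coord q = (a, b, c)"
  shows "\<exists>c'. coord (q [^] (n::nat)) = ((n * a) mod p, (n * b) mod p, c')"
proof (induction n)
  case 0 then show ?case by (simp add: coord_one)
next
  case (Suc n)
  then obtain c' where "coord (q [^] n) = ((n * a) mod p, (n * b) mod p, c')" by blast
  then show ?case
    using coord_mult[of "q [^] n" q] assms by (simp add: mod_simps ac_simps)
qed

lemma coord_central:
  assumes "q \<in> carrier Q" "coord q = (0, 0, c)"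
  shows "q = z [^] c \<and> c < p"
  using word_coord[OF assms(1)] coord_in_box[OF assms(1)] assms(2) word_z_pow by simp

lemma commute_coord_det:
  assumes "q \<in> carrier Q" "r \<in> carrier Q" "q \<otimes> r = r \<otimes> q"
    "coord q = (a1, a2, a3)" "coord r = (b1, b2, b3)"
  shows "int p dvd (int b1 * int a2 - int a1 * int b2)"
proof -
  have "(a3 + b3 + b1 * a2) mod p = (b3 + a3 + a1 * b2) mod p"
    using coord_mult[OF assms(1,2)] coord_mult[OF assms(2,1)] assms(3-5) by simp
  then have "(int a3 + int b3 + int b1 * int a2) mod int p = (int b3 + int a3 + int a1 * int b2) mod int p"
    by (metis of_nat_add of_nat_mult zmod_int)
  then show ?thesis by (simp add: mod_eq_dvd_iff algebra_simps)
qed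

definition beta :: "'a \<Rightarrow> 'a \<Rightarrow> rat" where
  "beta q r = of_int (heis_form (coord q) (coord r)) / of_nat p"

lemma beta_one_right: "beta q \<one> = 0"
  by (cases "coord q") (simp add: beta_def coord_one)

lemma beta_one_left: "beta \<one> q = 0"
  by (cases "coord q") (simp add: beta_def coord_one)

lemma beta_antisym_yz: "beta y z - beta z y = - 2 / of_nat p"
  by (simp add: beta_def coord_y coord_z diff_divide_distrib)

lemma beta_cocycle: "cocycle2 Q beta"
  unfolding cocycle2_def qz_eq_def
proof (intro ballI)
  fix g h k assume g: "g \<in> carrier Q" and h: "h \<in> carrier Q" and k: "k \<in> carrier Q"
  define u v w where "u = coord g" and "v = coord h" and "w = coord k"
  define D where "D = heis_form v w - heis_form (reduce_mod p (heis_mult u v)) w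
    + heis_form u (reduce_mod p (heis_mult v w)) - heis_form u v"
  have "D mod int p = (heis_form v w - heis_form (heis_mult u v) w
    + heis_form u (heis_mult v w) - heis_form u v) mod int p"
    unfolding D_def
    by (intro mod_diff_cong mod_add_cong refl heis_form_reduce_left heis_form_reduce_right)
  then have "D mod int p = 0" by (simp add: heis_form_cocycle)
  moreover have "beta h k - beta (g \<otimes> h) k + beta g (h \<otimes> k) - beta g h = of_int D / of_nat p"
    using g h k unfolding beta_def D_def u_def v_def w_def
    by (simp add: coord_mult add_divide_distrib diff_divide_distrib)
  ultimately show "beta h k - beta (g \<otimes> h) k + beta g (h \<otimes> k) - beta g h - 0 \<in> \<int>"
    using divisible_int_quotient_in_Ints p_gt1 by simp
qed

end

section \<open>Centralisers of non-central elements of the Heisenberg group\<close>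

lemma exists_mod_prime_solution:
  fixes p a b :: nat
  assumes "Factorial_Ring.prime p" "\<not> p dvd a"
  shows "\<exists>n. p dvd (b + n * a)"
proof -
  have "coprime a p" using prime_imp_coprime[OF assms] by (simp add: coprime_commute)
  moreover have "a \<noteq> 0" using assms(2) by (metis dvd_0_right)
  ultimately obtain u v where uv: "a * u = p * v + 1" using bezout_nat[of a p] by auto
  obtain q where q: "p = Suc q" using assms by (metis not0_implies_Suc prime_gt_0_nat not_gr0)
  have "b + (u * q * b) * a = b + q * b * (a * u)" by (simp add: algebra_simps)
  also have "\<dots> = p * (b + q * b * v)" using uv q by (simp add: algebra_simps)
  finally show ?thesis by (intro exI[of _ "u * q * b"]) simp
qed

lemma proportional_mod_prime:
  fixes p a1 a2 b1 b2 :: nat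
  assumes pr: "Factorial_Ring.prime p" and "a1 < p" "a2 < p" "\<not> (a1 = 0 \<and> a2 = 0)"
    and D: "int p dvd (int b1 * int a2 - int a1 * int b2)"
  shows "\<exists>n. (b1 + n * a1) mod p = 0 \<and> (b2 + n * a2) mod p = 0"
proof -
  have pr_int: "Factorial_Ring.prime (int p)" using pr by simp
  show ?thesis
  proof (cases "a1 = 0")
    case False
    then have "\<not> p dvd a1" using assms(2) by (auto dest: dvd_imp_le)
    then obtain n where n: "p dvd (b1 + n * a1)" using exists_mod_prime_solution[OF pr] by blast
    then have "int p dvd (int b1 + int n * int a1)" by (metis of_nat_add of_nat_mult of_nat_dvd_iff)
    moreover have "int a1 * (int b2 + int n * int a2)
      = int a2 * (int b1 + int n * int a1) - (int b1 * int a2 - int a1 * int b2)"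
      by (simp add: algebra_simps)
    ultimately have "int p dvd int a1 * (int b2 + int n * int a2)" using D by simp
    then have "int p dvd (int b2 + int n * int a2)"
      using pr_int prime_dvd_mult_iff \<open>\<not> p dvd a1\<close> by (metis int_dvd_int_iff)
    then have "p dvd (b2 + n * a2)" by (metis of_nat_add of_nat_mult of_nat_dvd_iff)
    then show ?thesis using n by (intro exI[of _ n]) (simp add: dvd_eq_mod_eq_0)
  next
    case True
    then have na2: "\<not> p dvd a2" using assms(3,4) by (auto dest: dvd_imp_le)
    then obtain n where n: "p dvd (b2 + n * a2)" using exists_mod_prime_solution[OF pr] by blast
    have "int p dvd int b1 * int a2" using D True by simp
    then have "p dvd b1" using na2 pr_int prime_dvd_mult_iff by (metis int_dvd_int_iff)
    then show ?thesis using n True by (intro exI[of _ n]) (simp add: dvd_eq_mod_eq_0)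
  qed
qed

lemma (in heisenberg) commuting_reduces_to_centre:
  assumes q: "q \<in> carrier Q" and r: "r \<in> carrier Q" and qr: "q \<otimes> r = r \<otimes> q"
    and cq: "coord q = (a1, a2, a3)" and nz: "\<not> (a1 = 0 \<and> a2 = 0)"
  shows "\<exists>n j. r \<otimes> q [^] (n::nat) = z [^] j \<and> j < p"
proof -
  obtain b1 b2 b3 where cr: "coord r = (b1, b2, b3)" by (cases "coord r") auto
  have abox: "a1 < p" "a2 < p" using coord_in_box[OF q] cq by auto
  obtain n :: nat where n: "(b1 + n * a1) mod p = 0" "(b2 + n * a2) mod p = 0"
    using proportional_mod_prime[OF p_prime abox nz commute_coord_det[OF q r qr cq cr]] by (elim exE conjE)
  obtain c' where cp: "coord (q [^] n) = ((n * a1) mod p, (n * a2) mod p, c')"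
    using coord_pow[OF q cq] by blast
  have "coord (r \<otimes> q [^] n) = (0, 0, snd (snd (coord (r \<otimes> q [^] n))))"
    using coord_mult[OF r, of "q [^] n"] q cr cp n by (simp add: mod_add_right_eq)
  then show ?thesis using coord_central[of "r \<otimes> q [^] n"] q r by blast
qed

(* The hypotheses of the theorem (without the redundant order and non-commutativity
   assumptions). *)
locale p5_group = group G for G (structure) +
  fixes p :: nat and f1 f2 f3 f4 f5 :: 'a
  assumes p_prime: "Factorial_Ring.prime p" and p_ge: "p \<ge> 3"
    and fin: "f1 \<in> carrier G" "f2 \<in> carrier G" "f3 \<in> carrier G" "f4 \<in> carrier G" "f5 \<in> carrier G"
    and gen: "generate G {f1, f2, f3, f4, f5} = carrier G"
    and i1: "f4 [^] p = \<one>" "f5 [^] p = \<one>"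
    and i2: "\<forall>x\<in>carrier G. x \<otimes> f5 = f5 \<otimes> x"
    and ii: "commutator G f2 f1 = f3" "commutator G f3 f1 = f4"
            "commutator G f4 f1 = f5" "commutator G f3 f2 = f5"
            "commutator G f4 f2 = \<one>" "commutator G f4 f3 = \<one>"
    and iii1: "G\<lparr>carrier := generate G {f4, f5}\<rparr> \<cong> integer_mod_group p \<times>\<times> integer_mod_group p"
    and iii_normal: "generate G {f4, f5} \<lhd> G"
    and iii2: "order (G Mod generate G {f4, f5}) = p ^ 3"
    and iii4: "has_exponent (G Mod generate G {f4, f5}) p"
begin

abbreviation "N \<equiv> generate G {f4, f5}"
abbreviation "Q \<equiv> G Mod N"

definition pi :: "'a \<Rightarrow> 'a set" where "pi g = N #> g"

lemma p_gt1: "p > 1" using p_ge by simp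

lemma r21: "f2 \<otimes> f1 = f1 \<otimes> f2 \<otimes> f3" using commutator_relation[OF fin(2) fin(1) ii(1)] .
lemma r31: "f3 \<otimes> f1 = f1 \<otimes> f3 \<otimes> f4" using commutator_relation[OF fin(3) fin(1) ii(2)] .
lemma r41: "f4 \<otimes> f1 = f1 \<otimes> f4 \<otimes> f5" using commutator_relation[OF fin(4) fin(1) ii(3)] .
lemma r32: "f3 \<otimes> f2 = f2 \<otimes> f3 \<otimes> f5" using commutator_relation[OF fin(3) fin(2) ii(4)] .
lemma r42: "f4 \<otimes> f2 = f2 \<otimes> f4" using commutator_relation[OF fin(4) fin(2) ii(5)] fin by simp
lemma r43: "f4 \<otimes> f3 = f3 \<otimes> f4" using commutator_relation[OF fin(4) fin(3) ii(6)] fin by simp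

lemma f5_pow_central: "g \<in> carrier G \<Longrightarrow> f5 [^] (t::nat) \<otimes> g = g \<otimes> f5 [^] t"
  using group_commutes_pow[of f5 g t] i2 fin by simp

lemma N_sub: "subgroup N G" using fin by (intro generate_is_subgroup) auto
lemma f4N: "f4 \<in> N" by (rule generate.incl) simp
lemma f5N: "f5 \<in> N" by (rule generate.incl) simp

lemma grpQ: "group Q" using normal.factorgroup_is_group[OF iii_normal] .

lemma pi_hom: "group_hom G Q pi"
proof -
  have "pi = (#>) N" by (rule ext) (simp add: pi_def)
  then show ?thesis using grpQ normal.r_coset_hom_Mod[OF iii_normal] is_group
    by (simp add: group_hom_def group_hom_axioms_def)
qed

lemma pi_closed: "g \<in> carrier G \<Longrightarrow> pi g \<in> carrier Q"
  using group_hom.hom_closed[OF pi_hom] .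
lemma pi_mult: "g \<in> carrier G \<Longrightarrow> h \<in> carrier G \<Longrightarrow> pi (g \<otimes> h) = pi g \<otimes>\<^bsub>Q\<^esub> pi h"
  using group_hom.hom_mult[OF pi_hom] .
lemma pi_pow: "g \<in> carrier G \<Longrightarrow> pi (g [^] (n::nat)) = pi g [^]\<^bsub>Q\<^esub> n"
  using group_hom.hom_nat_pow[OF pi_hom] .
lemma pi_inv: "g \<in> carrier G \<Longrightarrow> pi (inv g) = inv\<^bsub>Q\<^esub> (pi g)"
  using group_hom.hom_inv[OF pi_hom] .
lemma pi_N: "n \<in> N \<Longrightarrow> pi n = \<one>\<^bsub>Q\<^esub>"
  unfolding pi_def using subgroup.rcos_const[OF N_sub is_group] by simp
lemma pi_one: "pi \<one> = \<one>\<^bsub>Q\<^esub>" using pi_N generate.one by metis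

lemma same_image_imp_N_multiple:
  assumes "g \<in> carrier G" "w \<in> carrier G" "pi g = pi w"
  shows "\<exists>n\<in>N. g = n \<otimes> w"
  using rcos_self[OF assms(1) N_sub] assms(3) unfolding pi_def r_coset_def by auto

definition x :: "'a set" where "x = pi f1"
definition y :: "'a set" where "y = pi f2"
definition z :: "'a set" where "z = pi f3"

lemma xyz: "x \<in> carrier Q" "y \<in> carrier Q" "z \<in> carrier Q"
  unfolding x_def y_def z_def using pi_closed fin by auto

lemma Q_exponent: "q \<in> carrier Q \<Longrightarrow> q [^]\<^bsub>Q\<^esub> p = \<one>\<^bsub>Q\<^esub>"
  using iii4 unfolding has_exponent_def by blast

lemma Q_generated: "carrier Q \<subseteq> generate Q {x, y, z}"
proof
  fix q assume "q \<in> carrier Q"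
  then obtain g where g: "g \<in> carrier G" "q = pi g"
    unfolding pi_def by (auto simp: carrier_FactGroup)
  have one_gen: "\<one>\<^bsub>Q\<^esub> \<in> generate Q {x, y, z}" by (rule generate.one)
  have gens: "pi h \<in> generate Q {x, y, z}" if "h \<in> {f1, f2, f3, f4, f5}" for h
    using that pi_N[OF f4N] pi_N[OF f5N] one_gen generate.incl[of _ "{x, y, z}" Q]
    unfolding x_def y_def z_def by auto
  have "g \<in> generate G {f1, f2, f3, f4, f5}" using g gen by simp
  then have "pi g \<in> generate Q {x, y, z}"
  proof (induction rule: generate.induct)
    case one then show ?case using pi_one one_gen by simp
  next
    case (incl h) then show ?case by (rule gens)
  next
    case (inv h)
    have "inv\<^bsub>Q\<^esub> (pi h) \<in> generate Q {x, y, z}"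
      using inv pi_N[OF f4N] pi_N[OF f5N] one_gen generate.inv[of _ "{x, y, z}" Q]
        monoid.inv_one[OF group.is_monoid[OF grpQ]] unfolding x_def y_def z_def by auto
    then show ?case using pi_inv inv fin by auto
  next
    case (eng h1 h2)
    then have "h1 \<in> carrier G" "h2 \<in> carrier G" using gen by auto
    then show ?case using eng.IH pi_mult generate.eng by metis
  qed
  then show "q \<in> generate Q {x, y, z}" using g by simp
qed

lemma Q_heisenberg: "heisenberg Q p x y z"
proof -
  have Q_rel: "pi h \<otimes>\<^bsub>Q\<^esub> pi g = pi g \<otimes>\<^bsub>Q\<^esub> pi h \<otimes>\<^bsub>Q\<^esub> pi k"
    if "h \<otimes> g = g \<otimes> h \<otimes> k" "g \<in> carrier G" "h \<in> carrier G" "k \<in> carrier G" for g h k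
    using that pi_mult by (metis m_closed)
  have card: "card (carrier Q) = p ^ 3" using iii2 by (simp add: order_def)
  then have "finite (carrier Q)" using p_gt1 by (intro card_ge_0_finite) simp
  moreover have "z \<otimes>\<^bsub>Q\<^esub> x = x \<otimes>\<^bsub>Q\<^esub> z" "z \<otimes>\<^bsub>Q\<^esub> y = y \<otimes>\<^bsub>Q\<^esub> z"
    using Q_rel[OF r31 fin(1,3,4)] Q_rel[OF r32 fin(2,3,5)] pi_N[OF f4N] pi_N[OF f5N] xyz
      monoid.r_one[OF group.is_monoid[OF grpQ]] monoid.m_closed[OF group.is_monoid[OF grpQ]]
    unfolding x_def y_def z_def by metis+
  ultimately show ?thesis
    unfolding heisenberg_def heisenberg_axioms_def
    using grpQ p_prime xyz Q_rel[OF r21] fin Q_exponent card Q_generated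
    by (auto simp: x_def y_def z_def)
qed

end

sublocale p5_group \<subseteq> Hq: heisenberg "G Mod generate G {f4, f5}" p x y z
  by (rule Q_heisenberg)

context p5_group
begin

lemma N_word_mult:
  "(f4 [^] s \<otimes> f5 [^] t) \<otimes> (f4 [^] s' \<otimes> f5 [^] t') = f4 [^] ((s::nat) + s') \<otimes> f5 [^] ((t::nat) + t')"
proof -
  have "(f4 [^] s \<otimes> f5 [^] t) \<otimes> (f4 [^] s' \<otimes> f5 [^] t') = f4 [^] s \<otimes> (f5 [^] t \<otimes> f4 [^] s') \<otimes> f5 [^] t'"
    using fin by (simp add: m_assoc)
  also have "\<dots> = (f4 [^] s \<otimes> f4 [^] s') \<otimes> (f5 [^] t \<otimes> f5 [^] t')"
    using f5_pow_central[of "f4 [^] s'" t] fin by (simp add: m_assoc)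
  also have "\<dots> = f4 [^] (s + s') \<otimes> f5 [^] (t + t')"
    using fin by (simp add: nat_pow_mult)
  finally show ?thesis .
qed

lemma N_words: "n \<in> N \<Longrightarrow> \<exists>s t. n = f4 [^] (s::nat) \<otimes> f5 [^] (t::nat)"
proof (induction rule: generate.induct)
  case one
  then show ?case by (intro exI[of _ 0]) simp
next
  case (incl h)
  then show ?case using fin nat_pow_eone by (metis empty_iff insert_iff l_one r_one nat_pow_0)
next
  case (inv h)
  have "inv f4 = f4 [^] (p - 1) \<otimes> f5 [^] (0::nat)" "inv f5 = f4 [^] (0::nat) \<otimes> f5 [^] (p - 1)"
    using inv_eq_pow_pred[OF fin(4) i1(1)] inv_eq_pow_pred[OF fin(5) i1(2)] p_gt1 fin by auto
  then show ?case using inv by blast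
next
  case (eng h1 h2)
  then obtain s t s2 t2 where "h1 = f4 [^] (s::nat) \<otimes> f5 [^] (t::nat)"
    "h2 = f4 [^] (s2::nat) \<otimes> f5 [^] (t2::nat)" by blast
  then show ?case using N_word_mult[of s t s2 t2] by auto
qed

(* Since |N| = p^2, the words f4^s f5^t with s, t < p are pairwise distinct. *)
lemma N_word_inj: "inj_on (\<lambda>(s, t). f4 [^] s \<otimes> f5 [^] t) ({0..<p} \<times> {0..<p})"
proof (rule eq_card_imp_inj_on)
  have "N \<subseteq> (\<lambda>(s, t). f4 [^] s \<otimes> f5 [^] t) ` ({0..<p} \<times> {0..<p})"
  proof
    fix n assume "n \<in> N"
    then obtain s t where "n = f4 [^] (s::nat) \<otimes> f5 [^] (t::nat)" using N_words by blast
    then have "n = f4 [^] (s mod p) \<otimes> f5 [^] (t mod p)"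
      using pow_mod_exponent[OF fin(4) i1(1)] pow_mod_exponent[OF fin(5) i1(2)] by metis
    then show "n \<in> (\<lambda>(s, t). f4 [^] s \<otimes> f5 [^] t) ` ({0..<p} \<times> {0..<p})"
      using p_gt1 by (intro image_eqI[of _ _ "(s mod p, t mod p)"]) auto
  qed
  moreover have "(\<lambda>(s, t). f4 [^] s \<otimes> f5 [^] t) ` ({0..<p} \<times> {0..<p}) \<subseteq> N"
  proof -
    have N_pow: "a \<in> N \<Longrightarrow> a [^] (n::nat) \<in> N" for a n
      by (induction n) (auto intro: subgroup.m_closed[OF N_sub] subgroup.one_closed[OF N_sub])
    show ?thesis using subgroup.m_closed[OF N_sub] N_pow f4N f5N by auto
  qed
  moreover have "card N = p * p"
    using iso_same_card[OF iii1] p_gt1 by (simp add: carrier_integer_mod_group card_cartesian_product)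
  ultimately show "card ((\<lambda>(s, t). f4 [^] s \<otimes> f5 [^] t) ` ({0..<p} \<times> {0..<p}))
      = card ({0..<p} \<times> {0..<(p::nat)})"
    by (simp add: card_cartesian_product)
qed simp

lemma N_word_eq:
  assumes "f4 [^] (s1::nat) \<otimes> f5 [^] (t1::nat) = f4 [^] (s2::nat) \<otimes> f5 [^] (t2::nat)"
  shows "s1 mod p = s2 mod p \<and> t1 mod p = t2 mod p"
proof -
  have "f4 [^] (s1 mod p) \<otimes> f5 [^] (t1 mod p) = f4 [^] (s2 mod p) \<otimes> f5 [^] (t2 mod p)"
    using assms pow_mod_exponent[OF fin(4) i1(1)] pow_mod_exponent[OF fin(5) i1(2)] by metis
  then show ?thesis using inj_onD[OF N_word_inj] p_gt1 by auto
qed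

subsection \<open>The abelian subgroup <f3, f4, f5> and its conjugation by f1, f2\<close>

definition w345 :: "nat \<Rightarrow> nat \<Rightarrow> nat \<Rightarrow> 'a" where
  "w345 j s t = f3 [^] j \<otimes> (f4 [^] s \<otimes> f5 [^] t)"

lemma w345_closed [simp]: "w345 j s t \<in> carrier G" using fin by (simp add: w345_def)

lemma w345_mult: "w345 j s t \<otimes> w345 j' s' t' = w345 (j + j') (s + s') (t + t')"
proof -
  have f3_f4: "f3 [^] j' \<otimes> f4 [^] s = f4 [^] s \<otimes> f3 [^] j'"
    using pow_pow_commute[of f3 f4 j' s] r43 fin by simp
  have f3_N: "(f4 [^] s \<otimes> f5 [^] t) \<otimes> f3 [^] j' = f3 [^] j' \<otimes> (f4 [^] s \<otimes> f5 [^] t)"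
    using commute_mult[OF f3_f4 f5_pow_central[of "f3 [^] j'" t, symmetric]] fin by simp
  have "w345 j s t \<otimes> w345 j' s' t'
      = f3 [^] j \<otimes> ((f4 [^] s \<otimes> f5 [^] t) \<otimes> f3 [^] j') \<otimes> (f4 [^] s' \<otimes> f5 [^] t')"
    using fin by (simp add: w345_def m_assoc)
  also have "\<dots> = (f3 [^] j \<otimes> f3 [^] j') \<otimes> ((f4 [^] s \<otimes> f5 [^] t) \<otimes> (f4 [^] s' \<otimes> f5 [^] t'))"
    using fin f3_N by (simp add: m_assoc)
  also have "\<dots> = w345 (j + j') (s + s') (t + t')"
    using fin N_word_mult by (simp add: w345_def nat_pow_mult)
  finally show ?thesis .
qed

lemma w345_comm: "w345 j s t \<otimes> w345 j' s' t' = w345 j' s' t' \<otimes> w345 j s t"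
  by (simp only: w345_mult add.commute)

lemma w345_eq_imp:
  assumes "w345 j s t = w345 j s' t'"
  shows "s mod p = s' mod p \<and> t mod p = t' mod p"
proof -
  have "f4 [^] s \<otimes> f5 [^] t = f4 [^] s' \<otimes> f5 [^] t'"
    using assms fin by (simp add: w345_def)
  then show ?thesis by (rule N_word_eq)
qed

lemma w345_conj_f2: "w345 j s t \<otimes> f2 = f2 \<otimes> w345 j s (t + j)"
proof -
  have f3_f2: "f3 [^] i \<otimes> f2 = f2 \<otimes> w345 i 0 i" for i
  proof (induction i)
    case (Suc i)
    have "f3 [^] Suc i \<otimes> f2 = f3 [^] i \<otimes> (f3 \<otimes> f2)" using fin by (simp add: m_assoc)
    also have "\<dots> = (f3 [^] i \<otimes> f2) \<otimes> (f3 \<otimes> f5)" using fin r32 by (simp add: m_assoc)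
    also have "\<dots> = f2 \<otimes> (w345 i 0 i \<otimes> w345 1 0 1)" using Suc fin by (simp add: w345_def m_assoc)
    finally show ?case by (simp add: w345_mult)
  qed (use fin in \<open>simp add: w345_def\<close>)
  have f2_f4: "f2 \<otimes> f4 [^] s = f4 [^] s \<otimes> f2" using pow_pow_commute[of f4 f2 s 1] r42 fin by simp
  have f2_N: "f2 \<otimes> (f4 [^] s \<otimes> f5 [^] t) = (f4 [^] s \<otimes> f5 [^] t) \<otimes> f2"
    using commute_mult[OF f2_f4 f5_pow_central[of f2 t, symmetric]] fin by simp
  have "w345 j s t \<otimes> f2 = f3 [^] j \<otimes> ((f4 [^] s \<otimes> f5 [^] t) \<otimes> f2)"
    using fin by (simp add: w345_def m_assoc)
  also have "\<dots> = (f3 [^] j \<otimes> f2) \<otimes> (f4 [^] s \<otimes> f5 [^] t)"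
    using f2_N fin by (simp add: m_assoc)
  also have "\<dots> = f2 \<otimes> (w345 j 0 j \<otimes> w345 0 s t)"
    using f3_f2[of j] fin by (simp add: w345_def m_assoc)
  also have "\<dots> = f2 \<otimes> w345 j s (t + j)" by (simp add: w345_mult add.commute)
  finally show ?thesis .
qed

lemma w345_conj_f1: "w345 j s t \<otimes> f1 = f1 \<otimes> w345 j (s + j) (t + s)"
proof -
  have f3_f1: "f3 [^] i \<otimes> f1 = f1 \<otimes> w345 i i 0" for i
  proof (induction i)
    case (Suc i)
    have "f3 [^] Suc i \<otimes> f1 = f3 [^] i \<otimes> (f3 \<otimes> f1)" using fin by (simp add: m_assoc)
    also have "\<dots> = (f3 [^] i \<otimes> f1) \<otimes> (f3 \<otimes> f4)" using fin r31 by (simp add: m_assoc)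
    also have "\<dots> = f1 \<otimes> (w345 i i 0 \<otimes> w345 1 1 0)" using Suc fin by (simp add: w345_def m_assoc)
    finally show ?case by (simp add: w345_mult)
  qed (use fin in \<open>simp add: w345_def\<close>)
  have f4_f1: "f4 [^] i \<otimes> f1 = f1 \<otimes> w345 0 i i" for i
  proof (induction i)
    case (Suc i)
    have "f4 [^] Suc i \<otimes> f1 = f4 [^] i \<otimes> (f4 \<otimes> f1)" using fin by (simp add: m_assoc)
    also have "\<dots> = (f4 [^] i \<otimes> f1) \<otimes> (f4 \<otimes> f5)" using fin r41 by (simp add: m_assoc)
    also have "\<dots> = f1 \<otimes> (w345 0 i i \<otimes> w345 0 1 1)" using Suc fin by (simp add: w345_def m_assoc)
    finally show ?case by (simp add: w345_mult)
  qed (use fin in \<open>simp add: w345_def\<close>)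
  have "w345 j s t \<otimes> f1 = f3 [^] j \<otimes> ((f4 [^] s \<otimes> f1) \<otimes> f5 [^] t)"
    using fin f5_pow_central[of f1 t] by (simp add: w345_def m_assoc)
  also have "\<dots> = (f3 [^] j \<otimes> f1) \<otimes> (w345 0 s s \<otimes> w345 0 0 t)"
    using fin f4_f1[of s] by (simp add: m_assoc w345_def)
  also have "\<dots> = f1 \<otimes> (w345 j j 0 \<otimes> (w345 0 s s \<otimes> w345 0 0 t))"
    using fin f3_f1[of j] by (simp add: m_assoc)
  also have "\<dots> = f1 \<otimes> w345 j (s + j) (t + s)" by (simp add: w345_mult add.commute)
  finally show ?thesis .
qed

lemma w345_conj_f1_pow: "\<exists>t'. w345 j s t \<otimes> f1 [^] (a::nat) = f1 [^] a \<otimes> w345 j (s + a * j) t'"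
proof (induction a arbitrary: s t)
  case (Suc a)
  then obtain t' where t': "w345 j s t \<otimes> f1 [^] a = f1 [^] a \<otimes> w345 j (s + a * j) t'" by blast
  have "w345 j s t \<otimes> f1 [^] Suc a = (w345 j s t \<otimes> f1 [^] a) \<otimes> f1" using fin by (simp add: m_assoc)
  also have "\<dots> = f1 [^] a \<otimes> (w345 j (s + a * j) t' \<otimes> f1)" using t' fin by (simp add: m_assoc)
  also have "\<dots> = f1 [^] Suc a \<otimes> w345 j (s + Suc a * j) (t' + (s + a * j))"
    using w345_conj_f1 fin by (simp add: m_assoc add_ac)
  finally show ?case by blast
qed auto

lemma w345_conj_f2_pow: "w345 j s t \<otimes> f2 [^] (b::nat) = f2 [^] b \<otimes> w345 j s (t + b * j)"
proof (induction b arbitrary: t)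
  case (Suc b)
  have "w345 j s t \<otimes> f2 [^] Suc b = (w345 j s t \<otimes> f2 [^] b) \<otimes> f2" using fin by (simp add: m_assoc)
  also have "\<dots> = f2 [^] b \<otimes> (w345 j s (t + b * j) \<otimes> f2)" using Suc fin by (simp add: m_assoc)
  also have "\<dots> = f2 [^] Suc b \<otimes> w345 j s (t + Suc b * j)"
    using w345_conj_f2 fin by (simp add: m_assoc add_ac)
  finally show ?case .
qed simp

subsection \<open>Commuting elements of G have images in a common cyclic subgroup of Q\<close>

lemma pi_word: "Hq.word (a1, a2, a3) = pi (f1 [^] a1 \<otimes> f2 [^] a2 \<otimes> f3 [^] a3)"
  unfolding Hq.word_def using fin by (simp add: pi_mult pi_pow x_def y_def z_def)

lemma mod_eq_shift_imp_dvd: "s mod p = (s + k) mod p \<Longrightarrow> p dvd (k::nat)"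
  using mod_eq_dvd_iff_nat[of s "s + k" p] by simp

(* An element commuting with a lift m of a nontrivial central element z^j of Q maps into the
   centre of Q: writing g = n f1^a1 f2^a2 f3^a3 (n in N), the word W = f1^a1 f2^a2 must commute
   with m = f3^j f4^s f5^t, and conjugation by W shifts the f4-exponent by a1 j and then
   (once a1 = 0) the f5-exponent by a2 j. *)
lemma commutes_with_central_lift:
  assumes g: "g \<in> carrier G" and m: "m \<in> carrier G" and gm: "g \<otimes> m = m \<otimes> g"
    and pm: "pi m = z [^]\<^bsub>Q\<^esub> j" and j: "0 < j" "j < p"
    and cg: "Hq.coord (pi g) = (a1, a2, a3)"
  shows "a1 = 0 \<and> a2 = 0"
proof -
  have abox: "a1 < p" "a2 < p" using Hq.coord_in_box[OF pi_closed[OF g]] cg by auto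
  have nj: "\<not> p dvd j" using j by (auto dest: dvd_imp_le)
  define W where "W = f1 [^] a1 \<otimes> f2 [^] a2"
  have Wc: "W \<in> carrier G" using fin by (simp add: W_def)
  have "pi g = pi (W \<otimes> w345 a3 0 0)"
    using Hq.word_coord[OF pi_closed[OF g]] cg pi_word fin by (simp add: W_def w345_def)
  then obtain n0 where "n0 \<in> N" and g_n0: "g = n0 \<otimes> (W \<otimes> w345 a3 0 0)"
    using same_image_imp_N_multiple[OF g] Wc by (meson m_closed w345_closed)
  then obtain s0 t0 :: nat where "n0 = f4 [^] s0 \<otimes> f5 [^] t0" using N_words by blast
  then have g_eq: "g = w345 0 s0 t0 \<otimes> (W \<otimes> w345 a3 0 0)" using g_n0 fin by (simp add: w345_def)
  have "pi m = pi (w345 j 0 0)" using pm pi_pow fin by (simp add: z_def w345_def)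
  then obtain n1 where "n1 \<in> N" and m_n1: "m = n1 \<otimes> w345 j 0 0"
    using same_image_imp_N_multiple[OF m] by (meson w345_closed)
  then obtain s t :: nat where "n1 = f4 [^] s \<otimes> f5 [^] t" using N_words by blast
  then have "n1 = w345 0 s t" using fin by (simp add: w345_def)
  then have m_eq: "m = w345 j s t" using m_n1 w345_mult[of 0 s t j 0 0] by simp
  have W_comm: "W \<otimes> w345 j s t = w345 j s t \<otimes> W"
  proof -
    have "g \<otimes> m = w345 0 s0 t0 \<otimes> (W \<otimes> (w345 j s t \<otimes> w345 a3 0 0))"
      using Wc w345_comm[of a3 0 0 j s t] by (simp add: g_eq m_eq m_assoc)
    moreover have "m \<otimes> g = w345 0 s0 t0 \<otimes> (w345 j s t \<otimes> (W \<otimes> w345 a3 0 0))"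
    proof -
      have "m \<otimes> g = (w345 j s t \<otimes> w345 0 s0 t0) \<otimes> (W \<otimes> w345 a3 0 0)"
        using Wc by (simp add: g_eq m_eq m_assoc)
      also have "\<dots> = (w345 0 s0 t0 \<otimes> w345 j s t) \<otimes> (W \<otimes> w345 a3 0 0)"
        by (simp only: w345_comm[of j s t 0 s0 t0])
      finally show ?thesis using Wc by (simp add: m_assoc)
    qed
    ultimately have "(W \<otimes> w345 j s t) \<otimes> w345 a3 0 0 = (w345 j s t \<otimes> W) \<otimes> w345 a3 0 0"
      using gm Wc by (simp add: m_assoc)
    then show ?thesis using Wc by simp
  qed
  obtain t' where t': "w345 j s t \<otimes> f1 [^] a1 = f1 [^] a1 \<otimes> w345 j (s + a1 * j) t'"
    using w345_conj_f1_pow by blast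
  have "w345 j s t \<otimes> W = f1 [^] a1 \<otimes> (w345 j (s + a1 * j) t' \<otimes> f2 [^] a2)"
    using t' fin by (simp add: W_def m_assoc[symmetric])
  also have "\<dots> = W \<otimes> w345 j (s + a1 * j) (t' + a2 * j)"
    using w345_conj_f2_pow fin by (simp add: W_def m_assoc)
  finally have "w345 j s t \<otimes> W = W \<otimes> w345 j (s + a1 * j) (t' + a2 * j)" .
  then have "w345 j s t = w345 j (s + a1 * j) (t' + a2 * j)" using W_comm Wc by simp
  then have "p dvd a1 * j" using w345_eq_imp mod_eq_shift_imp_dvd by blast
  then have "p dvd a1" using nj p_prime prime_dvd_mult_iff by blast
  then have a1: "a1 = 0" using abox by (auto dest: dvd_imp_le)
  then have "w345 j s t \<otimes> W = W \<otimes> w345 j s (t + a2 * j)"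
    using w345_conj_f2_pow fin by (simp add: W_def)
  then have "w345 j s t = w345 j s (t + a2 * j)" using W_comm Wc by simp
  then have "p dvd a2 * j" using w345_eq_imp mod_eq_shift_imp_dvd by blast
  then have "p dvd a2" using nj p_prime prime_dvd_mult_iff by blast
  then show ?thesis using a1 abox by (auto dest: dvd_imp_le)
qed

(* If a, b commute in G and pi a is not central in Q, then pi b is a power of pi a:
   in Q some pi (b a^n) is a central z^j, and the previous lemma forces j = 0. *)
lemma commuting_image_in_cyclic:
  assumes a: "a \<in> carrier G" and b: "b \<in> carrier G" and ab: "a \<otimes> b = b \<otimes> a"
    and ca: "Hq.coord (pi a) = (a1, a2, a3)" and nz: "\<not> (a1 = 0 \<and> a2 = 0)"
  shows "\<exists>k::nat. pi b = pi a [^]\<^bsub>Q\<^esub> k"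
proof -
  have pa: "pi a \<in> carrier Q" and pb: "pi b \<in> carrier Q" using pi_closed a b by auto
  have "pi a \<otimes>\<^bsub>Q\<^esub> pi b = pi b \<otimes>\<^bsub>Q\<^esub> pi a" using ab pi_mult a b by metis
  then obtain n j where nj: "pi b \<otimes>\<^bsub>Q\<^esub> pi a [^]\<^bsub>Q\<^esub> (n::nat) = z [^]\<^bsub>Q\<^esub> j" "j < p"
    using Hq.commuting_reduces_to_centre[OF pa pb _ ca nz] by blast
  define m where "m = b \<otimes> a [^] n"
  have mc: "m \<in> carrier G" using a b by (simp add: m_def)
  have pm: "pi m = z [^]\<^bsub>Q\<^esub> j" using a b nj pi_mult pi_pow by (simp add: m_def)
  have "a \<otimes> m = (a \<otimes> b) \<otimes> a [^] n" using a b by (simp add: m_def m_assoc)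
  also have "\<dots> = b \<otimes> (a \<otimes> a [^] n)" using ab a b by (simp add: m_assoc)
  also have "\<dots> = m \<otimes> a" using a b nat_pow_Suc2[of a n] by (simp add: m_def m_assoc)
  finally have "a \<otimes> m = m \<otimes> a" .
  then have "j = 0" using commutes_with_central_lift[OF a mc _ pm _ nj(2) ca] nz by blast
  then have "pi b \<otimes>\<^bsub>Q\<^esub> pi a [^]\<^bsub>Q\<^esub> n = \<one>\<^bsub>Q\<^esub>" using nj by simp
  then have "pi b = inv\<^bsub>Q\<^esub> (pi a [^]\<^bsub>Q\<^esub> n)" using pa pb by (simp add: Hq.inv_char Hq.inv_equality)
  also have "\<dots> = pi a [^]\<^bsub>Q\<^esub> (n * (p - 1))"
    using Hq.inv_eq_pow_pred[OF _ Q_exponent] pa p_gt1 by (simp add: Hq.nat_pow_pow)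
  finally show ?thesis by blast
qed

lemma commuting_images_cyclic:
  assumes a: "a \<in> carrier G" and b: "b \<in> carrier G" and ab: "a \<otimes> b = b \<otimes> a"
  shows "\<exists>u\<in>carrier Q. \<exists>(ka::nat) (kb::nat). pi a = u [^]\<^bsub>Q\<^esub> ka \<and> pi b = u [^]\<^bsub>Q\<^esub> kb"
proof -
  have pa: "pi a \<in> carrier Q" and pb: "pi b \<in> carrier Q" using pi_closed a b by auto
  obtain a1 a2 a3 where ca: "Hq.coord (pi a) = (a1, a2, a3)" by (cases "Hq.coord (pi a)") auto
  obtain b1 b2 b3 where cb: "Hq.coord (pi b) = (b1, b2, b3)" by (cases "Hq.coord (pi b)") auto
  consider "\<not> (a1 = 0 \<and> a2 = 0)" | "\<not> (b1 = 0 \<and> b2 = 0)" | "a1 = 0" "a2 = 0" "b1 = 0" "b2 = 0"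
    by blast
  then show ?thesis
  proof cases
    case 1
    then obtain k :: nat where k: "pi b = pi a [^]\<^bsub>Q\<^esub> k"
      using commuting_image_in_cyclic[OF a b ab ca] by blast
    have a1: "pi a = pi a [^]\<^bsub>Q\<^esub> (1::nat)" by (rule Hq.nat_pow_eone[OF pa, symmetric])
    have "\<exists>(ka::nat) (kb::nat). pi a = pi a [^]\<^bsub>Q\<^esub> ka \<and> pi b = pi a [^]\<^bsub>Q\<^esub> kb"
      by (rule exI[of _ "1::nat"], rule exI[of _ k], rule conjI[OF a1 k])
    then show ?thesis using pa by (rule bexI[where x = "pi a"])
  next
    case 2
    then obtain k :: nat where k: "pi a = pi b [^]\<^bsub>Q\<^esub> k"
      using commuting_image_in_cyclic[OF b a ab[symmetric] cb] by blast
    have b1: "pi b = pi b [^]\<^bsub>Q\<^esub> (1::nat)" by (rule Hq.nat_pow_eone[OF pb, symmetric])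
    have "\<exists>(ka::nat) (kb::nat). pi a = pi b [^]\<^bsub>Q\<^esub> ka \<and> pi b = pi b [^]\<^bsub>Q\<^esub> kb"
      by (rule exI[of _ k], rule exI[of _ "1::nat"], rule conjI[OF k b1])
    then show ?thesis using pb by (rule bexI[where x = "pi b"])
  next
    case 3
    then have "pi a = z [^]\<^bsub>Q\<^esub> a3" "pi b = z [^]\<^bsub>Q\<^esub> b3"
      using Hq.coord_central[OF pa] Hq.coord_central[OF pb] ca cb by auto
    then show ?thesis using xyz by blast
  qed
qed

lemma generate_image_in_powers:
  assumes u: "u \<in> carrier Q" and a: "a \<in> carrier G" and b: "b \<in> carrier G"
    and ia: "pi a = u [^]\<^bsub>Q\<^esub> (ka::nat)" and ib: "pi b = u [^]\<^bsub>Q\<^esub> (kb::nat)"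
    and g: "g \<in> generate G {a, b}"
  shows "\<exists>i::nat. pi g = u [^]\<^bsub>Q\<^esub> i"
  using g
proof (induction rule: generate.induct)
  case one then show ?case using pi_one by (intro exI[of _ 0]) simp
next
  case (incl h) then show ?case using ia ib by auto
next
  case (inv h)
  then obtain i :: nat where i: "pi h = u [^]\<^bsub>Q\<^esub> i" using ia ib by auto
  have "pi (inv h) = inv\<^bsub>Q\<^esub> (u [^]\<^bsub>Q\<^esub> i)" using pi_inv i inv a b by auto
  also have "\<dots> = u [^]\<^bsub>Q\<^esub> (i * (p - 1))"
    using Hq.inv_eq_pow_pred[OF _ Q_exponent] u p_gt1 by (simp add: Hq.nat_pow_pow)
  finally show ?case by blast
next
  case (eng h1 h2)
  have "generate G {a, b} \<subseteq> carrier G" using a b by (intro generate_incl) auto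
  then have "pi (h1 \<otimes> h2) = pi h1 \<otimes>\<^bsub>Q\<^esub> pi h2" using pi_mult eng.hyps by blast
  moreover obtain i j :: nat where "pi h1 = u [^]\<^bsub>Q\<^esub> i" "pi h2 = u [^]\<^bsub>Q\<^esub> j" using eng.IH by blast
  ultimately have "pi (h1 \<otimes> h2) = u [^]\<^bsub>Q\<^esub> (i + j)" using Hq.nat_pow_mult[OF u] by metis
  then show ?case by blast
qed

definition infl :: "'a \<Rightarrow> 'a \<Rightarrow> rat" where "infl g h = Hq.beta (pi g) (pi h)"

lemma infl_cocycle: "cocycle2 G infl"
  unfolding cocycle2_def
proof (intro ballI)
  fix g h k assume g: "g \<in> carrier G" and h: "h \<in> carrier G" and k: "k \<in> carrier G"
  have "qz_eq (Hq.beta (pi h) (pi k) - Hq.beta (pi g \<otimes>\<^bsub>Q\<^esub> pi h) (pi k)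
     + Hq.beta (pi g) (pi h \<otimes>\<^bsub>Q\<^esub> pi k) - Hq.beta (pi g) (pi h)) 0"
    using Hq.beta_cocycle pi_closed g h k unfolding cocycle2_def by blast
  then show "qz_eq (infl h k - infl (g \<otimes> h) k + infl g (h \<otimes> k) - infl g h) 0"
    unfolding infl_def using pi_mult g h k by simp
qed

(* Applying coboundary_commutator to f3 f2 = f2 f3 f5 and f4 f1 = f1 f4 f5 gives
   -2/p - f(f5) and -f(f5) in Z, contradicting p >= 3. *)
lemma infl_not_coboundary: "\<not> coboundary2 G infl"
proof
  assume "coboundary2 G infl"
  then obtain f where cob: "\<And>g h. g \<in> carrier G \<Longrightarrow> h \<in> carrier G
      \<Longrightarrow> qz_eq (infl g h) (f h - f (g \<otimes> h) + f g)"
    unfolding coboundary2_def by blast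
  have vanish: "infl (f2 \<otimes> f3) f5 = 0" "infl (f1 \<otimes> f4) f5 = 0" "infl f1 f4 = 0" "infl f4 f1 = 0"
    unfolding infl_def using pi_N[OF f4N] pi_N[OF f5N] Hq.beta_one_right Hq.beta_one_left by simp_all
  have "infl f2 f3 - infl f3 f2 = - 2 / of_nat p"
    unfolding infl_def using Hq.beta_antisym_yz by (simp add: y_def z_def)
  then have "- 2 / of_nat p - f f5 \<in> \<int>"
    using coboundary_commutator[OF cob fin(2) fin(3) fin(5) r32] vanish fin by simp
  moreover have "- f f5 \<in> \<int>"
    using coboundary_commutator[OF cob fin(1) fin(4) fin(5) r41] vanish fin by simp
  ultimately have "(- 2 / of_nat p - f f5) - (- f f5) \<in> \<int>" by (rule Ints_diff)
  then have "(2 / of_nat p :: rat) \<in> \<int>" by (simp add: minus_in_Ints_iff)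
  then obtain k :: int where "2 / (of_nat p :: rat) = of_int k" by (rule Ints_cases)
  then have "(2 :: rat) = of_int (k * int p)" using p_gt1 by (simp add: field_simps)
  then have "int p dvd 2" by (metis dvd_triv_right of_int_eq_numeral_iff)
  then show False using p_ge by (auto dest: zdvd_imp_le)
qed

(* On a bicyclic A = <a, b> the images pi a, pi b lie in a cyclic <u>, where beta is a
   coboundary df; then f o pi trivialises the restriction of infl to A. *)
lemma infl_bicyclic_coboundary:
  assumes "bicyclic_subgroup G A"
  shows "coboundary2 (G\<lparr>carrier := A\<rparr>) infl"
proof -
  from assms obtain a b where a: "a \<in> carrier G" and b: "b \<in> carrier G"
    and A: "A = generate G {a, b}" and comm: "\<forall>x\<in>A. \<forall>y\<in>A. x \<otimes> y = y \<otimes> x"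
    unfolding bicyclic_subgroup_def by blast
  have "a \<otimes> b = b \<otimes> a" using comm A generate.incl[of _ "{a, b}" G] by auto
  then obtain u ka kb where u: "u \<in> carrier Q" and ia: "pi a = u [^]\<^bsub>Q\<^esub> (ka::nat)"
    and ib: "pi b = u [^]\<^bsub>Q\<^esub> (kb::nat)" using commuting_images_cyclic[OF a b] by blast
  obtain f where f: "\<forall>(i::nat) (j::nat). qz_eq (Hq.beta (u [^]\<^bsub>Q\<^esub> i) (u [^]\<^bsub>Q\<^esub> j))
      (f (u [^]\<^bsub>Q\<^esub> j) - f (u [^]\<^bsub>Q\<^esub> i \<otimes>\<^bsub>Q\<^esub> u [^]\<^bsub>Q\<^esub> j) + f (u [^]\<^bsub>Q\<^esub> i))"
    using Hq.cocycle_on_cyclic_is_coboundary[OF Hq.finQ u Hq.beta_cocycle] by blast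
  show ?thesis
    unfolding coboundary2_def
  proof (rule exI[of _ "\<lambda>g. f (pi g)"], intro ballI)
    fix g h assume "g \<in> carrier (G\<lparr>carrier := A\<rparr>)" "h \<in> carrier (G\<lparr>carrier := A\<rparr>)"
    then have gA: "g \<in> generate G {a, b}" and hA: "h \<in> generate G {a, b}" using A by auto
    have "generate G {a, b} \<subseteq> carrier G" using a b by (intro generate_incl) auto
    then have gh: "g \<in> carrier G" "h \<in> carrier G" using gA hA by auto
    obtain i :: nat where i: "pi g = u [^]\<^bsub>Q\<^esub> i"
      using generate_image_in_powers[OF u a b ia ib gA] by (elim exE)
    obtain j :: nat where j: "pi h = u [^]\<^bsub>Q\<^esub> j"
      using generate_image_in_powers[OF u a b ia ib hA] by (elim exE)
    have mult_A: "g \<otimes>\<^bsub>G\<lparr>carrier := A\<rparr>\<^esub> h = g \<otimes> h" by simp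
    have pi_gh: "pi (g \<otimes> h) = u [^]\<^bsub>Q\<^esub> i \<otimes>\<^bsub>Q\<^esub> u [^]\<^bsub>Q\<^esub> j"
      unfolding i[symmetric] j[symmetric] by (rule pi_mult[OF gh])
    show "qz_eq (infl g h) (f (pi h) - f (pi (g \<otimes>\<^bsub>G\<lparr>carrier := A\<rparr>\<^esub> h)) + f (pi g))"
      unfolding infl_def mult_A pi_gh unfolding i j using f by blast
  qed
qed

end

theorem lemma2p2:
  fixes G (structure) and p :: nat and f1 f2 f3 f4 f5 :: 'a
  assumes grp: "group G"
    and p_prime: "Factorial_Ring.prime p" and p_ge: "p \<ge> 3"
    and ordG: "finite (carrier G)" "order G = p ^ 5"
    and fin: "f1 \<in> carrier G" "f2 \<in> carrier G" "f3 \<in> carrier G" "f4 \<in> carrier G" "f5 \<in> carrier G"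
    and gen: "generate G {f1, f2, f3, f4, f5} = carrier G"
    and i1: "f4 [^] p = \<one>" "f5 [^] p = \<one>"
    and i2: "\<forall>x\<in>carrier G. x \<otimes> f5 = f5 \<otimes> x"
    and ii: "commutator G f2 f1 = f3" "commutator G f3 f1 = f4"
            "commutator G f4 f1 = f5" "commutator G f3 f2 = f5"
            "commutator G f4 f2 = \<one>" "commutator G f4 f3 = \<one>"
    and iii1: "G\<lparr>carrier := generate G {f4, f5}\<rparr> \<cong> integer_mod_group p \<times>\<times> integer_mod_group p"
    and iii_normal: "generate G {f4, f5} \<lhd> G"
    and iii2: "order (G Mod generate G {f4, f5}) = p ^ 3"
    and iii3: "\<not> comm_group (G Mod generate G {f4, f5})"
    and iii4: "has_exponent (G Mod generate G {f4, f5}) p"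
  shows "bogomolov_nontrivial G"
proof -
  have "p5_group G p f1 f2 f3 f4 f5"
    unfolding p5_group_def p5_group_axioms_def
    using grp p_prime p_ge fin gen i1 i2 ii iii1 iii_normal iii2 iii4 by blast
  then interpret p5_group G p f1 f2 f3 f4 f5 .
  show ?thesis
    unfolding bogomolov_nontrivial_def
    using infl_cocycle infl_not_coboundary infl_bicyclic_coboundary by blast
qed

end
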